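(* Let $G$ be a BTB graph and $d\ge1$. Sending a circuit configuration $(V,\mu)$ on $G$ with vectors in $\mathbb C^{d+1}$ to the map $w\mapsto[V(w)]\in\mathbb{CP}^d$ induces a one-to-one correspondence between gauge-equivalence classes of circuit configurations on $G$ and TCD maps on $G$ into $\mathbb{CP}^d$.
   Context: A BTB graph is a planar bipartite graph (black $B$, white $W$, edges $E$) embedded in a disk or cactus with every black vertex of degree $3$. A TCD map is $T:W\to\mathbb{CP}^d$ such that for each black vertex the images of its three white neighbours are pairwise distinct and lie on a common line. A vector-relation configuration (VRC) on $G$ is a pair consisting of nonzero vectors $V(w)\in\mathbb C^{d+1}$ for $w\in W$ and, for each black vertex $b$, a linear relation $\sum_{bw\in E}\mu(bw)V(w)=0$ with edge weights $\mu(bw)\in\mathbb C$. It is a circuit configuration if for every $b$ the vectors $\{V(w):bw\in E\}$ form a circuit (a minimal linearly dependent set). A gauge transformation, given by $\lambda:B\sqcup W\to\mathbb C^*$, sends $V(w)\mapsto\lambda(w)V(w)$, the relation at $b$ to $\lambda(b)$ times it, and $\mu(bw)\mapsto\lambda(b)\lambda(w)^{-1}\mu(bw)$. *)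

theory Defs
  imports "HOL-Analysis.Analysis"
begin

(* Combinatorial part of a BTB graph: finite bipartite graph with black vertices B,
   white vertices W, edges E \<subseteq> B \<times> W, every black vertex of degree 3.
   (The planar embedding in a disk/cactus is not modelled.) *)
definition nbrs :: "('b \<times> 'w) set \<Rightarrow> 'b \<Rightarrow> 'w set" where
  "nbrs E b = {w. (b, w) \<in> E}"

definition btb_graph :: "'b set \<Rightarrow> 'w set \<Rightarrow> ('b \<times> 'w) set \<Rightarrow> bool" where
  "btb_graph B W E \<longleftrightarrow> finite B \<and> finite W \<and> E \<subseteq> B \<times> W \<and>
     (\<forall>b\<in>B. card (nbrs E b) = 3)"

definition proj_pt :: "complex^'n::finite \<Rightarrow> (complex^'n::finite) set" where
  "proj_pt v = {c *s v | c. c \<noteq> 0}"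

definition proj_space :: "((complex^'n::finite) set) set" where
  "proj_space = {proj_pt v | v. v \<noteq> 0}"

definition on_common_line :: "((complex^'n::finite) set) set \<Rightarrow> bool" where
  "on_common_line P \<longleftrightarrow> (\<exists>L. vec.subspace L \<and> vec.dim L = 2 \<and> (\<forall>p\<in>P. p \<subseteq> L))"

definition tcd_maps :: "'b set \<Rightarrow> 'w set \<Rightarrow> ('b \<times> 'w) set \<Rightarrow> ('w \<Rightarrow> (complex^'n::finite) set) set" where
  "tcd_maps B W E = {T. T \<in> extensional W \<and> (\<forall>w\<in>W. T w \<in> proj_space) \<and>
     (\<forall>b\<in>B. (\<forall>w1\<in>nbrs E b. \<forall>w2\<in>nbrs E b. w1 \<noteq> w2 \<longrightarrow> T w1 \<noteq> T w2) \<and>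
             on_common_line (T ` nbrs E b))}"

definition fam_dependent :: "'w set \<Rightarrow> ('w \<Rightarrow> complex^'n::finite) \<Rightarrow> bool" where
  "fam_dependent S V \<longleftrightarrow> (\<exists>c. (\<Sum>w\<in>S. c w *s V w) = 0 \<and> (\<exists>w\<in>S. c w \<noteq> 0))"

definition is_circuit :: "'w set \<Rightarrow> ('w \<Rightarrow> complex^'n::finite) \<Rightarrow> bool" where
  "is_circuit S V \<longleftrightarrow> fam_dependent S V \<and> (\<forall>S'. S' \<subset> S \<longrightarrow> \<not> fam_dependent S' V)"

type_synonym ('b, 'w, 'n) config = "('w \<Rightarrow> complex^'n) \<times> ('b \<times> 'w \<Rightarrow> complex)"

definition is_vrc :: "'b set \<Rightarrow> 'w set \<Rightarrow> ('b \<times> 'w) set \<Rightarrow> ('b, 'w, 'n::finite) config \<Rightarrow> bool" where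
  "is_vrc B W E C \<longleftrightarrow> (\<forall>w\<in>W. fst C w \<noteq> 0) \<and>
     (\<forall>b\<in>B. (\<Sum>w\<in>nbrs E b. snd C (b, w) *s fst C w) = 0 \<and> (\<exists>w\<in>nbrs E b. snd C (b, w) \<noteq> 0))"

definition circuit_configs :: "'b set \<Rightarrow> 'w set \<Rightarrow> ('b \<times> 'w) set \<Rightarrow> ('b, 'w, 'n::finite) config set" where
  "circuit_configs B W E = {C. is_vrc B W E C \<and> (\<forall>b\<in>B. is_circuit (nbrs E b) (fst C))}"

definition gauge_equiv :: "'b set \<Rightarrow> 'w set \<Rightarrow> ('b \<times> 'w) set \<Rightarrow> ('b, 'w, 'n::finite) config \<Rightarrow> ('b, 'w, 'n::finite) config \<Rightarrow> bool" where
  "gauge_equiv B W E C1 C2 \<longleftrightarrow> (\<exists>lb lw.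
     (\<forall>b\<in>B. lb b \<noteq> (0::complex)) \<and> (\<forall>w\<in>W. lw w \<noteq> (0::complex)) \<and>
     (\<forall>w\<in>W. fst C2 w = lw w *s fst C1 w) \<and>
     (\<forall>(b, w)\<in>E. snd C2 (b, w) = lb b * inverse (lw w) * snd C1 (b, w)))"

definition gauge_rel :: "'b set \<Rightarrow> 'w set \<Rightarrow> ('b \<times> 'w) set \<Rightarrow> (('b, 'w, 'n::finite) config \<times> ('b, 'w, 'n::finite) config) set" where
  "gauge_rel B W E = {(C1, C2). C1 \<in> circuit_configs B W E \<and> C2 \<in> circuit_configs B W E \<and>
     gauge_equiv B W E C1 C2}"

definition proj_map :: "'w set \<Rightarrow> ('b, 'w, 'n::finite) config \<Rightarrow> ('w \<Rightarrow> (complex^'n::finite) set)" where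
  "proj_map W C = restrict (\<lambda>w. proj_pt (fst C w)) W"

end

theory Submission
  imports Defs
begin

text \<open>Three nonzero vectors form a circuit iff no two of them are proportional and all three lie
  in a 2-dimensional subspace: three vectors in a plane are dependent, and a dependence among
  pairwise independent vectors puts each of them in the span of the other two. Hence at every
  black vertex the circuit condition on the lifts is exactly the TCD condition on the points, so
  projection maps circuit configurations onto TCD maps (a TCD map lifts by choosing
  representatives and, at each black vertex, a relation). Two circuit configurations with the
  same projection differ by rescaling the vectors, and since the relation on a circuit is unique
  up to a scalar their relations differ by rescalings at the black vertices. So the fibres of
  the projection are exactly the gauge classes.\<close>

lemma bij_betw_quotient_image:
  assumes r: "\<And>x y. (x, y) \<in> r \<longleftrightarrow> x \<in> A \<and> y \<in> A \<and> f x = f y"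
  shows "bij_betw (\<lambda>X. THE y. \<exists>x\<in>X. y = f x) (A // r) (f ` A)"
proof -
  let ?g = "\<lambda>X. THE y. \<exists>x\<in>X. y = f x"
  have fibre: "r `` {x} = {x' \<in> A. f x' = f x}" if "x \<in> A" for x
    using r that by auto
  have g_fibre: "?g (r `` {x}) = f x" if "x \<in> A" for x
    using that by (auto simp: fibre)
  show ?thesis
  proof (rule bij_betw_imageI)
    show "inj_on ?g (A // r)"
    proof (rule inj_onI)
      fix X Y assume "X \<in> A // r" "Y \<in> A // r" and g_eq: "?g X = ?g Y"
      then obtain x y where "x \<in> A" "X = r `` {x}" "y \<in> A" "Y = r `` {y}"
        by (auto elim!: quotientE)
      with g_eq show "X = Y"
        by (simp add: g_fibre) (simp add: fibre)
    qed
    have "A // r = (\<lambda>x. r `` {x}) ` A"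
      by (auto simp: quotient_def)
    then show "?g ` (A // r) = f ` A"
      by (simp add: image_image g_fibre cong: image_cong)
  qed
qed

lemma proj_pt_scale:
  fixes v :: "complex^'n::finite"
  assumes "c \<noteq> 0"
  shows "proj_pt (c *s v) = proj_pt v"
proof -
  have "a *s (c *s v) = (a * c) *s v" and "b *s v = (b / c) *s (c *s v)" for a b
    using assms by simp_all
  then show ?thesis
    using assms unfolding proj_pt_def by (metis divide_eq_0_iff mult_eq_0_iff)
qed

lemma proj_pt_self: "v \<in> proj_pt v"
  unfolding proj_pt_def by (auto intro!: exI[of _ 1])

lemma proj_pt_eq_iff:
  fixes u v :: "complex^'n::finite"
  shows "proj_pt u = proj_pt v \<longleftrightarrow> (\<exists>c. c \<noteq> 0 \<and> u = c *s v)"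
proof
  assume "proj_pt u = proj_pt v"
  then have "u \<in> proj_pt v"
    using proj_pt_self by metis
  then show "\<exists>c. c \<noteq> 0 \<and> u = c *s v"
    unfolding proj_pt_def by blast
qed (use proj_pt_scale in blast)

lemma proj_pt_subset_subspace:
  assumes "vec.subspace L" "v \<in> L"
  shows "proj_pt v \<subseteq> L"
  unfolding proj_pt_def using assms vec.subspace_scale by blast

lemma independent_if_proj_pt_neq:
  fixes u v :: "complex^'n::finite"
  assumes "u \<noteq> 0" "v \<noteq> 0" "proj_pt u \<noteq> proj_pt v"
  shows "vec.independent {u, v}"
proof -
  have "u \<notin> vec.span {v}"
  proof
    assume "u \<in> vec.span {v}"
    then obtain c where "u = c *s v"
      unfolding vec.span_singleton by blast
    with assms show False
      by (metis proj_pt_eq_iff vector_smult_lzero)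
  qed
  moreover have "u \<noteq> v"
    using assms(3) by blast
  ultimately show ?thesis
    using assms(2) by (simp add: vec.independent_insert)
qed

lemma fam_dependent_mono:
  assumes "fam_dependent S V" "S \<subseteq> S'" "finite S'"
  shows "fam_dependent S' V"
proof -
  obtain c where c: "(\<Sum>w\<in>S. c w *s V w) = 0" "\<exists>w\<in>S. c w \<noteq> 0"
    using assms(1) unfolding fam_dependent_def by blast
  let ?c = "\<lambda>w. if w \<in> S then c w else 0"
  have "(\<Sum>w\<in>S'. ?c w *s V w) = (\<Sum>w\<in>S. ?c w *s V w)"
    using assms(2,3) by (intro sum.mono_neutral_right) auto
  also have "\<dots> = (\<Sum>w\<in>S. c w *s V w)"
    by simp
  finally have "(\<Sum>w\<in>S'. ?c w *s V w) = 0"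
    using c(1) by simp
  with c(2) assms(2) show ?thesis
    unfolding fam_dependent_def by (intro exI[of _ ?c]) auto
qed

lemma fam_dependent_pair_iff:
  fixes V :: "'w \<Rightarrow> complex^'n::finite"
  assumes "x \<noteq> y" "V x \<noteq> 0" "V y \<noteq> 0"
  shows "fam_dependent {x, y} V \<longleftrightarrow> proj_pt (V x) = proj_pt (V y)"
proof
  assume "fam_dependent {x, y} V"
  then obtain c where "(\<Sum>w\<in>{x, y}. c w *s V w) = 0" "\<exists>w\<in>{x, y}. c w \<noteq> 0"
    unfolding fam_dependent_def by blast
  then obtain a b where ab: "a *s V x + b *s V y = 0" "a \<noteq> 0 \<or> b \<noteq> 0"
    using assms(1) by auto
  then have "a \<noteq> 0" "b \<noteq> 0"
    using assms(2,3) by auto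
  moreover have "V x = (- b / a) *s V y"
  proof -
    have "a *s V x = - (b *s V y)"
      using ab(1) by (simp add: eq_neg_iff_add_eq_0)
    then have "inverse a *s (a *s V x) = inverse a *s - (b *s V y)"
      by simp
    with \<open>a \<noteq> 0\<close> show ?thesis
      by (simp add: divide_inverse mult.commute)
  qed
  ultimately show "proj_pt (V x) = proj_pt (V y)"
    by (metis divide_eq_0_iff neg_equal_0_iff_equal proj_pt_scale)
next
  assume "proj_pt (V x) = proj_pt (V y)"
  then obtain c where "V x = c *s V y"
    by (auto simp: proj_pt_eq_iff)
  then have "(\<Sum>w\<in>{x, y}. (if w = x then 1 else - c) *s V w) = 0"
    using assms(1) by simp
  then show "fam_dependent {x, y} V"
    unfolding fam_dependent_def by (intro exI[of _ "\<lambda>w. if w = x then 1 else - c"]) simp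
qed

lemma fam_dependent_iff_dependent_image:
  fixes V :: "'w \<Rightarrow> complex^'n::finite"
  assumes "finite S" "inj_on V S"
  shows "fam_dependent S V \<longleftrightarrow> vec.dependent (V ` S)"
proof -
  have reindex: "(\<Sum>v\<in>V ` S. u v *s v) = (\<Sum>w\<in>S. u (V w) *s V w)" for u
    using sum.reindex[OF assms(2), of "\<lambda>v. u v *s v"] unfolding comp_def .
  show ?thesis
  proof
    assume "fam_dependent S V"
    then obtain c where c: "(\<Sum>w\<in>S. c w *s V w) = 0" "\<exists>w\<in>S. c w \<noteq> 0"
      unfolding fam_dependent_def by blast
    let ?u = "\<lambda>v. c (the_inv_into S V v)"
    have u_V: "?u (V w) = c w" if "w \<in> S" for w
      using the_inv_into_f_f[OF assms(2) that] by simp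
    have "(\<Sum>v\<in>V ` S. ?u v *s v) = 0"
      using c(1) by (simp add: reindex u_V)
    moreover have "\<exists>v\<in>V ` S. ?u v \<noteq> 0"
      using c(2) u_V by auto
    ultimately show "vec.dependent (V ` S)"
      unfolding vec.dependent_finite[OF finite_imageI[OF assms(1)]] by (intro exI[of _ ?u]) simp
  next
    assume "vec.dependent (V ` S)"
    then obtain u where "(\<Sum>v\<in>V ` S. u v *s v) = 0" "\<exists>v\<in>V ` S. u v \<noteq> 0"
      using vec.dependent_finite[OF finite_imageI[OF assms(1)]] by blast
    then have "(\<Sum>w\<in>S. u (V w) *s V w) = 0" "\<exists>w\<in>S. u (V w) \<noteq> 0"
      by (simp_all add: reindex)
    then show "fam_dependent S V"
      unfolding fam_dependent_def by (intro exI[of _ "\<lambda>w. u (V w)"]) simp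
  qed
qed

lemma circuit_relation_coeff_nonzero:
  assumes "finite S" "is_circuit S V"
    and "(\<Sum>w\<in>S. \<mu> w *s V w) = 0" "\<exists>w\<in>S. \<mu> w \<noteq> 0" "z \<in> S"
  shows "\<mu> z \<noteq> 0"
proof
  assume z: "\<mu> z = 0"
  have "(\<Sum>w\<in>S - {z}. \<mu> w *s V w) = (\<Sum>w\<in>S. \<mu> w *s V w)"
    using assms(1,5) z by (intro sum.mono_neutral_left) auto
  then have "fam_dependent (S - {z}) V"
    unfolding fam_dependent_def using assms(3,4) z by (intro exI[of _ \<mu>]) auto
  moreover have "S - {z} \<subset> S"
    using assms(5) by auto
  ultimately show False
    using assms(2) unfolding is_circuit_def by blast
qed

text \<open>Subtracting a suitable multiple of one relation from the other kills a coefficient, and a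
  relation on a circuit with a vanishing coefficient is trivial.\<close>

lemma circuit_relation_unique:
  assumes "finite S" "is_circuit S V"
    and "(\<Sum>w\<in>S. \<mu>1 w *s V w) = 0" "\<exists>w\<in>S. \<mu>1 w \<noteq> 0"
    and "(\<Sum>w\<in>S. \<mu>2 w *s V w) = 0" "\<exists>w\<in>S. \<mu>2 w \<noteq> 0"
  shows "\<exists>k. k \<noteq> 0 \<and> (\<forall>w\<in>S. \<mu>2 w = k * \<mu>1 w)"
proof -
  obtain a where a: "a \<in> S"
    using assms(4) by blast
  have \<mu>1_a: "\<mu>1 a \<noteq> 0" and \<mu>2_a: "\<mu>2 a \<noteq> 0"
    using circuit_relation_coeff_nonzero[OF assms(1,2)] assms(3-6) a by blast+
  define k where "k = \<mu>2 a / \<mu>1 a"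
  let ?r = "\<lambda>w. \<mu>2 w - k * \<mu>1 w"
  have "(\<Sum>w\<in>S. ?r w *s V w) = (\<Sum>w\<in>S. \<mu>2 w *s V w) - k *s (\<Sum>w\<in>S. \<mu>1 w *s V w)"
    by (simp add: vector_sub_rdistrib sum_subtractf vec.scale_sum_right)
  also have "\<dots> = 0"
    using assms(3,5) by simp
  finally have "(\<Sum>w\<in>S. ?r w *s V w) = 0" .
  moreover have "?r a = 0"
    using \<mu>1_a unfolding k_def by simp
  ultimately have "\<forall>w\<in>S. ?r w = 0"
    using circuit_relation_coeff_nonzero[OF assms(1,2), of ?r a] a by blast
  moreover have "k \<noteq> 0"
    using \<mu>1_a \<mu>2_a unfolding k_def by simp
  ultimately show ?thesis
    by (intro exI[of _ k]) auto
qed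

lemma is_circuit_card3_iff:
  fixes V :: "'w \<Rightarrow> complex^'n::finite"
  assumes S: "card S = 3" and nonzero: "\<forall>w\<in>S. V w \<noteq> 0"
  shows "is_circuit S V \<longleftrightarrow> fam_dependent S V \<and> inj_on (\<lambda>w. proj_pt (V w)) S"
proof -
  obtain x y z where xyz: "S = {x, y, z}" "x \<noteq> y" "y \<noteq> z" "x \<noteq> z"
    using S card_3_iff by metis
  have pair_dependent_iff: "fam_dependent {w1, w2} V \<longleftrightarrow> proj_pt (V w1) = proj_pt (V w2)"
    if "w1 \<in> S" "w2 \<in> S" "w1 \<noteq> w2" for w1 w2
    using fam_dependent_pair_iff[of w1 w2 V] nonzero that by blast
  have "(\<forall>S'. S' \<subset> S \<longrightarrow> \<not> fam_dependent S' V) \<longleftrightarrow> inj_on (\<lambda>w. proj_pt (V w)) S"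
  proof
    assume minimal: "\<forall>S'. S' \<subset> S \<longrightarrow> \<not> fam_dependent S' V"
    show "inj_on (\<lambda>w. proj_pt (V w)) S"
    proof (rule inj_onI, rule ccontr)
      fix w1 w2
      assume "w1 \<in> S" "w2 \<in> S" "proj_pt (V w1) = proj_pt (V w2)" "w1 \<noteq> w2"
      moreover have "{w1, w2} \<subset> S"
        using \<open>w1 \<in> S\<close> \<open>w2 \<in> S\<close> xyz by auto
      ultimately show False
        using minimal pair_dependent_iff by blast
    qed
  next
    assume inj: "inj_on (\<lambda>w. proj_pt (V w)) S"
    show "\<forall>S'. S' \<subset> S \<longrightarrow> \<not> fam_dependent S' V"
    proof (intro allI impI notI)
      fix S' assume "S' \<subset> S" "fam_dependent S' V"
      moreover have "S' \<subseteq> {x, y} \<or> S' \<subseteq> {x, z} \<or> S' \<subseteq> {y, z}"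
        using \<open>S' \<subset> S\<close> xyz by blast
      moreover have "\<not> fam_dependent {w1, w2} V"
        if "w1 \<in> S" "w2 \<in> S" "w1 \<noteq> w2" for w1 w2
        using that inj pair_dependent_iff by (auto dest: inj_onD)
      ultimately show False
        using fam_dependent_mono[of S' V] xyz by blast
    qed
  qed
  then show ?thesis
    unfolding is_circuit_def by blast
qed

lemma fam_dependent_card3_iff_on_common_line:
  fixes V :: "'w \<Rightarrow> complex^'n::finite"
  assumes S: "card S = 3" and nonzero: "\<forall>w\<in>S. V w \<noteq> 0"
    and inj: "inj_on (\<lambda>w. proj_pt (V w)) S"
  shows "fam_dependent S V \<longleftrightarrow> on_common_line ((\<lambda>w. proj_pt (V w)) ` S)"
proof -
  have "finite S"
    using S by (metis card.infinite zero_neq_numeral)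
  moreover have inj_V: "inj_on V S"
    using inj by (auto simp: inj_on_def)
  ultimately have dependent_iff: "fam_dependent S V \<longleftrightarrow> vec.dependent (V ` S)"
    by (rule fam_dependent_iff_dependent_image)
  obtain x y z where xyz: "S = {x, y, z}" "x \<noteq> y" "y \<noteq> z" "x \<noteq> z"
    using S card_3_iff by metis
  have xy_independent: "vec.independent {V x, V y}"
    using independent_if_proj_pt_neq nonzero inj xyz by (auto dest: inj_onD)
  show ?thesis
  proof
    assume "fam_dependent S V"
    then have "vec.dependent (insert (V z) {V x, V y})"
      using dependent_iff xyz by (simp add: insert_commute)
    moreover have "V z \<notin> {V x, V y}"
      using inj_V xyz by (auto dest: inj_onD)
    ultimately have "V z \<in> vec.span {V x, V y}"
      using xy_independent vec.independent_insert[of "V z" "{V x, V y}"] by metis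
    then have in_span: "V w \<in> vec.span {V x, V y}" if "w \<in> S" for w
      using that xyz by (auto intro: vec.span_base)
    have "V x \<noteq> V y"
      using inj_V xyz by (auto dest: inj_onD)
    then have "vec.dim (vec.span {V x, V y}) = 2"
      using vec.dim_span_eq_card_independent[OF xy_independent] by simp
    moreover have "\<forall>p\<in>(\<lambda>w. proj_pt (V w)) ` S. p \<subseteq> vec.span {V x, V y}"
      using in_span proj_pt_subset_subspace[OF vec.subspace_span] by blast
    ultimately show "on_common_line ((\<lambda>w. proj_pt (V w)) ` S)"
      unfolding on_common_line_def by (intro exI[of _ "vec.span {V x, V y}"]) simp
  next
    assume "on_common_line ((\<lambda>w. proj_pt (V w)) ` S)"
    then obtain L where L: "vec.subspace L" "vec.dim L = 2" "\<forall>w\<in>S. proj_pt (V w) \<subseteq> L"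
      unfolding on_common_line_def by blast
    then have "V ` S \<subseteq> L"
      using proj_pt_self by blast
    moreover have "card (V ` S) = 3"
      using card_image[OF inj_V] S by simp
    ultimately have "vec.dependent (V ` S)"
      using vec.independent_card_le_dim[of "V ` S" L] L(2) by linarith
    then show "fam_dependent S V"
      using dependent_iff by blast
  qed
qed

lemma is_circuit_card3_iff_on_common_line:
  fixes V :: "'w \<Rightarrow> complex^'n::finite"
  assumes "card S = 3" "\<forall>w\<in>S. V w \<noteq> 0"
  shows "is_circuit S V \<longleftrightarrow>
    inj_on (\<lambda>w. proj_pt (V w)) S \<and> on_common_line ((\<lambda>w. proj_pt (V w)) ` S)"
  using is_circuit_card3_iff[OF assms] fam_dependent_card3_iff_on_common_line[OF assms]
  by blast

lemma btb_graph_nbrs: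
  assumes "btb_graph B W E" "b \<in> B"
  shows "card (nbrs E b) = 3" "finite (nbrs E b)" "nbrs E b \<subseteq> W"
proof -
  show "card (nbrs E b) = 3"
    using assms unfolding btb_graph_def by blast
  then show "finite (nbrs E b)"
    by (metis card.infinite zero_neq_numeral)
  show "nbrs E b \<subseteq> W"
    using assms unfolding btb_graph_def nbrs_def by blast
qed

lemma inj_on_proj_map_iff:
  "S \<subseteq> W \<Longrightarrow> inj_on (proj_map W C) S \<longleftrightarrow> inj_on (\<lambda>w. proj_pt (fst C w)) S"
  by (auto simp: proj_map_def subset_eq intro!: inj_on_cong)

lemma image_proj_map:
  "S \<subseteq> W \<Longrightarrow> proj_map W C ` S = (\<lambda>w. proj_pt (fst C w)) ` S"
  by (auto simp: proj_map_def subset_eq intro!: image_cong)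

lemma proj_map_in_tcd_maps:
  assumes "btb_graph B W E" "C \<in> circuit_configs B W E"
  shows "proj_map W C \<in> tcd_maps B W E"
proof -
  have nonzero: "\<forall>w\<in>W. fst C w \<noteq> 0"
    using assms(2) unfolding circuit_configs_def is_vrc_def by blast
  have "inj_on (proj_map W C) (nbrs E b) \<and> on_common_line (proj_map W C ` nbrs E b)"
    if "b \<in> B" for b
  proof -
    note nbrs = btb_graph_nbrs[OF assms(1) that]
    have "\<forall>w\<in>nbrs E b. fst C w \<noteq> 0"
      using nbrs(3) nonzero by blast
    moreover have "is_circuit (nbrs E b) (fst C)"
      using assms(2) that unfolding circuit_configs_def by blast
    ultimately show ?thesis
      using is_circuit_card3_iff_on_common_line[OF nbrs(1), of "fst C"]
        inj_on_proj_map_iff[OF nbrs(3), of C] image_proj_map[OF nbrs(3), of C]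
      by simp
  qed
  moreover have "\<forall>w\<in>W. proj_map W C w \<in> proj_space"
    using nonzero unfolding proj_map_def proj_space_def by auto
  ultimately show ?thesis
    unfolding tcd_maps_def proj_map_def[of W C] inj_on_def by auto
qed

lemma tcd_map_lifts_to_circuit_config:
  assumes "btb_graph B W E" "T \<in> tcd_maps B W E"
  shows "\<exists>C\<in>circuit_configs B W E. proj_map W C = T"
proof -
  have T: "T \<in> extensional W" "\<forall>w\<in>W. \<exists>v. v \<noteq> 0 \<and> T w = proj_pt v"
    using assms(2) unfolding tcd_maps_def proj_space_def by auto
  have T_at: "\<forall>b\<in>B. inj_on T (nbrs E b) \<and> on_common_line (T ` nbrs E b)"
    using assms(2) unfolding tcd_maps_def inj_on_def by blast
  obtain V where V: "\<forall>w\<in>W. V w \<noteq> 0 \<and> T w = proj_pt (V w)"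
    using bchoice[OF T(2)] by (elim exE)
  have circuit: "is_circuit (nbrs E b) V" if "b \<in> B" for b
  proof -
    note nbrs = btb_graph_nbrs[OF assms(1) that]
    have "\<forall>w\<in>nbrs E b. V w \<noteq> 0" "T ` nbrs E b = (\<lambda>w. proj_pt (V w)) ` nbrs E b"
      "inj_on T (nbrs E b) \<longleftrightarrow> inj_on (\<lambda>w. proj_pt (V w)) (nbrs E b)"
      using V nbrs(3) by (auto simp: subset_eq intro!: image_cong inj_on_cong)
    then show ?thesis
      using is_circuit_card3_iff_on_common_line[OF nbrs(1), of V] bspec[OF T_at that] by simp
  qed
  then have "\<forall>b\<in>B. \<exists>\<mu>. (\<Sum>w\<in>nbrs E b. \<mu> w *s V w) = 0 \<and> (\<exists>w\<in>nbrs E b. \<mu> w \<noteq> 0)"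
    unfolding is_circuit_def fam_dependent_def by blast
  then obtain \<mu> where \<mu>: "\<forall>b\<in>B. (\<Sum>w\<in>nbrs E b. \<mu> b w *s V w) = 0 \<and> (\<exists>w\<in>nbrs E b. \<mu> b w \<noteq> 0)"
    by (rule bchoice[THEN exE])
  define C where "C = (V, \<lambda>(b, w). \<mu> b w)"
  have "C \<in> circuit_configs B W E"
    unfolding circuit_configs_def is_vrc_def C_def using V \<mu> circuit by auto
  moreover have "proj_map W C = T"
    using extensional_restrict[OF T(1)] V unfolding proj_map_def C_def
    by (metis (no_types, lifting) fst_conv restrict_ext)
  ultimately show ?thesis
    by blast
qed

lemma gauge_equiv_imp_proj_map_eq:
  assumes "gauge_equiv B W E C1 C2"
  shows "proj_map W C1 = proj_map W C2"
proof -
  obtain lw where "\<forall>w\<in>W. lw w \<noteq> 0 \<and> fst C2 w = lw w *s fst C1 w"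
    using assms unfolding gauge_equiv_def by blast
  then show ?thesis
    unfolding proj_map_def by (intro restrict_ext) (simp add: proj_pt_scale)
qed

lemma proj_map_eq_imp_gauge_equiv:
  assumes G: "btb_graph B W E"
    and C1: "C1 \<in> circuit_configs B W E" and C2: "C2 \<in> circuit_configs B W E"
    and eq: "proj_map W C1 = proj_map W C2"
  shows "gauge_equiv B W E C1 C2"
proof -
  obtain V1 \<mu>1 where C1_def: "C1 = (V1, \<mu>1)" by (cases C1)
  obtain V2 \<mu>2 where C2_def: "C2 = (V2, \<mu>2)" by (cases C2)
  have "\<forall>w\<in>W. \<exists>c. c \<noteq> 0 \<and> V2 w = c *s V1 w"
    using eq unfolding C1_def C2_def proj_map_def
    by (metis fst_conv proj_pt_eq_iff restrict_apply')
  then obtain lw where lw: "\<forall>w\<in>W. lw w \<noteq> 0 \<and> V2 w = lw w *s V1 w"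
    by (rule bchoice[THEN exE])
  have "\<forall>b\<in>B. \<exists>k. k \<noteq> 0 \<and> (\<forall>w\<in>nbrs E b. \<mu>2 (b, w) * lw w = k * \<mu>1 (b, w))"
  proof
    fix b assume b: "b \<in> B"
    note nbrs = btb_graph_nbrs[OF G b]
    have rel1: "(\<Sum>w\<in>nbrs E b. \<mu>1 (b, w) *s V1 w) = 0" "\<exists>w\<in>nbrs E b. \<mu>1 (b, w) \<noteq> 0"
      and circuit: "is_circuit (nbrs E b) V1"
      using C1 b unfolding C1_def circuit_configs_def is_vrc_def by auto
    have rel2: "(\<Sum>w\<in>nbrs E b. \<mu>2 (b, w) *s V2 w) = 0" "\<exists>w\<in>nbrs E b. \<mu>2 (b, w) \<noteq> 0"
      using C2 b unfolding C2_def circuit_configs_def is_vrc_def by auto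
    have "(\<Sum>w\<in>nbrs E b. (\<mu>2 (b, w) * lw w) *s V1 w) = (\<Sum>w\<in>nbrs E b. \<mu>2 (b, w) *s V2 w)"
      using nbrs(3) lw by (intro sum.cong) auto
    then have "(\<Sum>w\<in>nbrs E b. (\<mu>2 (b, w) * lw w) *s V1 w) = 0"
      using rel2(1) by simp
    moreover have "\<exists>w\<in>nbrs E b. \<mu>2 (b, w) * lw w \<noteq> 0"
      using rel2(2) nbrs(3) lw by auto
    ultimately show "\<exists>k. k \<noteq> 0 \<and> (\<forall>w\<in>nbrs E b. \<mu>2 (b, w) * lw w = k * \<mu>1 (b, w))"
      using circuit_relation_unique[OF nbrs(2) circuit rel1] by simp
  qed
  then obtain lb where lb: "\<forall>b\<in>B. lb b \<noteq> 0 \<and> (\<forall>w\<in>nbrs E b. \<mu>2 (b, w) * lw w = lb b * \<mu>1 (b, w))"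
    by (rule bchoice[THEN exE])
  have "\<mu>2 (b, w) = lb b * inverse (lw w) * \<mu>1 (b, w)" if "(b, w) \<in> E" for b w
  proof -
    have "b \<in> B" "w \<in> W" "w \<in> nbrs E b"
      using G that unfolding btb_graph_def nbrs_def by auto
    then show ?thesis
      using lb lw by (simp add: field_simps)
  qed
  then show ?thesis
    unfolding gauge_equiv_def C1_def C2_def using lb lw
    by (intro exI[of _ lb] exI[of _ lw]) auto
qed

lemma gauge_rel_iff_proj_map_eq:
  assumes "btb_graph B W E"
  shows "(C1, C2) \<in> gauge_rel B W E \<longleftrightarrow>
    C1 \<in> circuit_configs B W E \<and> C2 \<in> circuit_configs B W E \<and> proj_map W C1 = proj_map W C2"
  using gauge_equiv_imp_proj_map_eq proj_map_eq_imp_gauge_equiv[OF assms]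
  unfolding gauge_rel_def by blast

theorem proposition3p3:
  fixes B :: "'b set" and W :: "'w set" and E :: "('b \<times> 'w) set" and d :: nat
  assumes "btb_graph B W E" and "d \<ge> 1" and "CARD('n) = d + 1"
  shows "(\<forall>C1\<in>(circuit_configs B W E :: ('b, 'w, 'n::finite) config set). \<forall>C2\<in>circuit_configs B W E.
            gauge_equiv B W E C1 C2 \<longrightarrow> proj_map W C1 = proj_map W C2)
       \<and> bij_betw (\<lambda>X. THE T. \<exists>C\<in>X. T = proj_map W C)
           (circuit_configs B W E // gauge_rel B W E)
           (tcd_maps B W E :: ('w \<Rightarrow> (complex^'n::finite) set) set)"
proof -
  let ?A = "circuit_configs B W E :: ('b, 'w, 'n) config set"
  have "proj_map W ` ?A = tcd_maps B W E"
    using proj_map_in_tcd_maps[OF assms(1)] tcd_map_lifts_to_circuit_config[OF assms(1)] by blast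
  moreover have "bij_betw (\<lambda>X. THE T. \<exists>C\<in>X. T = proj_map W C) (?A // gauge_rel B W E) (proj_map W ` ?A)"
    by (intro bij_betw_quotient_image gauge_rel_iff_proj_map_eq assms(1))
  moreover have "\<forall>C1\<in>?A. \<forall>C2\<in>?A. gauge_equiv B W E C1 C2 \<longrightarrow> proj_map W C1 = proj_map W C2"
    using gauge_equiv_imp_proj_map_eq by blast
  ultimately show ?thesis
    by simp
qed

end
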